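(* An almost discrete (Tychonoff) space $X$ is Grothendieck if and only if $X$ is Lindelöf and $t(X)=\omega$.
   Context: A space is almost discrete if it has exactly one non-isolated point. $C_p(X)$ is the space of continuous real-valued functions on $X$ with the pointwise convergence topology. A space $Z$ is a $g$-space if every subset $A\subseteq Z$ such that every infinite subset of $A$ has an accumulation point in $Z$ has compact closure in $Z$. $X$ is Grothendieck if every subspace of $C_p(X)$ is a $g$-space. $t(X)$ denotes the tightness of $X$. *)

theory Defs
  imports "HOL-Analysis.Analysis"
begin

definition tychonoff_space :: "'a topology \<Rightarrow> bool" where
  "tychonoff_space X \<longleftrightarrow> completely_regular_space X \<and> Hausdorff_space X"

definition isolated_point :: "'a topology \<Rightarrow> 'a \<Rightarrow> bool" where
  "isolated_point X x \<longleftrightarrow> x \<in> topspace X \<and> openin X {x}"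

definition almost_discrete :: "'a topology \<Rightarrow> bool" where
  "almost_discrete X \<longleftrightarrow> (\<exists>!x. x \<in> topspace X \<and> \<not> isolated_point X x)"

text \<open>C_p(X): continuous real functions on X (as extensional functions on topspace X)
  with the topology of pointwise convergence, i.e. as a subspace of the product R^X.\<close>
definition Cp :: "'a topology \<Rightarrow> ('a \<Rightarrow> real) topology" where
  "Cp X = subtopology (product_topology (\<lambda>_. euclideanreal) (topspace X))
            {f \<in> extensional (topspace X). continuous_map X euclideanreal f}"

definition g_space :: "'b topology \<Rightarrow> bool" where
  "g_space Z \<longleftrightarrow>
     (\<forall>A. A \<subseteq> topspace Z \<and>
          (\<forall>B. B \<subseteq> A \<and> infinite B \<longrightarrow> Z derived_set_of B \<noteq> {})
          \<longrightarrow> compactin Z (Z closure_of A))"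

definition grothendieck :: "'a topology \<Rightarrow> bool" where
  "grothendieck X \<longleftrightarrow> (\<forall>S. S \<subseteq> topspace (Cp X) \<longrightarrow> g_space (subtopology (Cp X) S))"

text \<open>Countable tightness, t(X) = omega (tightness is by convention at least omega).\<close>
definition countably_tight :: "'a topology \<Rightarrow> bool" where
  "countably_tight X \<longleftrightarrow>
     (\<forall>A x. A \<subseteq> topspace X \<and> x \<in> X closure_of A \<longrightarrow>
        (\<exists>B. B \<subseteq> A \<and> countable B \<and> x \<in> X closure_of B))"

end

theory Submission
  imports Defs
begin

text \<open>Let \<open>p\<close> be the non-isolated point. A real function on \<open>X\<close> is continuous as soon as
  it is constant near \<open>p\<close>; in particular the indicator of any set whose closure misses \<open>p\<close>
  is continuous. If \<open>X\<close> is not Lindelof (some neighbourhood of \<open>p\<close> has uncountable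
  complement \<open>T\<close>) or not countably tight (\<open>p\<close> is in the closure of \<open>T\<close> but of no countable
  subset), the indicators of the countable subsets of \<open>T\<close> form a subspace of \<open>C\<^sub>p(X)\<close> in
  which every infinite subset accumulates, since countably many of them lie in a compact cube
  \<open>{0,1}\<^sup>E\<close> with \<open>E\<close> countable; but the subspace is not closed in \<open>\<real>\<^sup>X\<close>, since the indicator of
  \<open>T\<close> is in its closure, so it is not compact and not a g-space.

  Conversely, for Lindelof \<open>X\<close> every continuous \<open>f\<close> differs from \<open>f p\<close> only on a countable
  set. If every infinite subset of \<open>A \<subseteq> S \<subseteq> C\<^sub>p(X)\<close> accumulates in \<open>S\<close>, then \<open>A\<close> is
  pointwise bounded, so its closure \<open>K\<close> in \<open>\<real>\<^sup>X\<close> is compact, and it suffices to show \<open>K \<subseteq> S\<close>.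
  For \<open>g \<in> K\<close> a countable closing-off argument yields a countable \<open>Y \<ni> p\<close> and a sequence in
  \<open>A\<close> converging pointwise to the function that is \<open>g\<close> on \<open>Y\<close> and \<open>g p\<close> off \<open>Y\<close>; such a
  pointwise limit lies in the closure of \<open>A\<close> in \<open>S\<close>, hence is continuous. Applied with \<open>Y\<close>
  containing a countable set that has \<open>p\<close> in its closure (countable tightness), continuity at \<open>p\<close>
  shows that \<open>g\<close> differs from \<open>g p\<close> only countably often; choosing \<open>Y\<close> to contain all
  these points recovers \<open>g\<close> itself.\<close>

lemma topspace_powertop_real [simp]: "topspace (powertop_real I) = extensional I"
  by (simp add: PiE_def)

lemma topspace_Cp:
  "topspace (Cp X) = {f \<in> extensional (topspace X). continuous_map X euclideanreal f}"
  by (auto simp: Cp_def extensional_def)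

lemma subtopology_Cp:
  assumes "S \<subseteq> topspace (Cp X)"
  shows "subtopology (Cp X) S = subtopology (powertop_real (topspace X)) S"
  using assms unfolding Cp_def subtopology_subtopology topspace_Cp by (simp add: Int_absorb1)

definition relatively_countably_compact :: "'b topology \<Rightarrow> 'b set \<Rightarrow> bool" where
  "relatively_countably_compact Z A \<longleftrightarrow> (\<forall>B. B \<subseteq> A \<and> infinite B \<longrightarrow> Z derived_set_of B \<noteq> {})"

lemma g_space_iff:
  "g_space Z \<longleftrightarrow>
     (\<forall>A \<subseteq> topspace Z. relatively_countably_compact Z A \<longrightarrow> compactin Z (Z closure_of A))"
  by (auto simp: g_space_def relatively_countably_compact_def)

lemma openin_subtopology_powertop_coordinate:
  assumes "x \<in> I" "open V"
  shows "openin (subtopology (powertop_real I) S)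
           {w \<in> topspace (subtopology (powertop_real I) S). w x \<in> V}"
proof (rule openin_continuous_map_preimage)
  show "continuous_map (subtopology (powertop_real I) S) euclideanreal (\<lambda>w. w x)"
    using assms(1) by (intro continuous_map_from_subtopology continuous_map_product_projection)
qed (use assms(2) in simp)

lemma infinite_near_derived_point:
  fixes fs :: "nat \<Rightarrow> 'a \<Rightarrow> real"
  assumes z: "z \<in> subtopology (powertop_real I) S derived_set_of (range fs)"
    and "x \<in> I" "e > 0"
  shows "infinite {n. \<bar>fs n x - z x\<bar> < e}"
proof -
  define Z where "Z = subtopology (powertop_real I) S"
  define U where "U = {w \<in> topspace Z. w x \<in> ball (z x) e}"
  have "t1_space Z"
    unfolding Z_def
    by (simp add: Hausdorff_imp_t1_space Hausdorff_space_subtopology Hausdorff_space_product_topology)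
  moreover have "openin Z U"
    unfolding U_def Z_def using assms(2) by (rule openin_subtopology_powertop_coordinate) simp
  moreover have "z \<in> U"
    using z derived_set_of_subset_topspace assms(3) unfolding U_def Z_def by fastforce
  ultimately have "infinite (range fs \<inter> U)"
    using z t1_space_derived_set_of_infinite_openin unfolding Z_def by fastforce
  moreover have "range fs \<inter> U \<subseteq> fs ` {n. \<bar>fs n x - z x\<bar> < e}"
    by (auto simp: U_def dist_real_def abs_minus_commute)
  ultimately show ?thesis
    using finite_surj by blast
qed

lemma LIMSEQ_unique_frequently_near:
  fixes u :: "nat \<Rightarrow> real"
  assumes "u \<longlonglongrightarrow> l" and near: "\<And>e. e > 0 \<Longrightarrow> infinite {n. \<bar>u n - c\<bar> < e}"
  shows "l = c"
proof (rule ccontr)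
  assume "l \<noteq> c"
  define e where "e = \<bar>l - c\<bar> / 2"
  have "e > 0"
    using \<open>l \<noteq> c\<close> by (simp add: e_def)
  then obtain N where N: "\<And>n. n \<ge> N \<Longrightarrow> \<bar>u n - l\<bar> < e"
    using assms(1) unfolding LIMSEQ_iff by (metis real_norm_def)
  obtain n where "n \<ge> N" "\<bar>u n - c\<bar> < e"
    using near[OF \<open>e > 0\<close>] unfolding infinite_nat_iff_unbounded_le by blast
  with N[of n] show False
    unfolding e_def by (simp add: abs_if split: if_splits)
qed

lemma pointwise_limit_in_closure:
  fixes fs :: "nat \<Rightarrow> 'a \<Rightarrow> real"
  assumes rcc: "relatively_countably_compact (subtopology (powertop_real I) S) A"
    and AS: "A \<subseteq> S" and S: "S \<subseteq> extensional I"
    and fs: "range fs \<subseteq> A" and h: "h \<in> extensional I"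
    and lim: "\<And>x. x \<in> I \<Longrightarrow> (\<lambda>n. fs n x) \<longlonglongrightarrow> h x"
  shows "h \<in> subtopology (powertop_real I) S closure_of A"
proof (cases "finite (range fs)")
  case True
  then obtain f where f: "f \<in> range fs" "infinite (fs -` {f})"
    using inf_img_fin_domE infinite_UNIV_nat by blast
  have "h = f"
  proof (rule extensionalityI[OF h])
    show "f \<in> extensional I"
      using f(1) fs AS S by blast
    fix x assume "x \<in> I"
    show "h x = f x"
    proof (rule LIMSEQ_unique_frequently_near[OF lim[OF \<open>x \<in> I\<close>]])
      fix e :: real assume "e > 0"
      then have "fs -` {f} \<subseteq> {n. \<bar>fs n x - f x\<bar> < e}"
        by auto
      then show "infinite {n. \<bar>fs n x - f x\<bar> < e}"
        using f(2) finite_subset by blast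
    qed
  qed
  then have "h \<in> A"
    using f(1) fs by blast
  moreover have "A \<subseteq> topspace (subtopology (powertop_real I) S)"
    using AS S unfolding topspace_subtopology topspace_powertop_real by blast
  ultimately show ?thesis
    using closure_of_subset by blast
next
  case False
  then obtain z where z: "z \<in> subtopology (powertop_real I) S derived_set_of (range fs)"
    using rcc fs unfolding relatively_countably_compact_def by blast
  have "h = z"
  proof (rule extensionalityI[OF h])
    show "z \<in> extensional I"
      using z derived_set_of_subset_topspace[of "subtopology (powertop_real I) S" "range fs"]
      unfolding topspace_subtopology topspace_powertop_real by blast
    fix x assume "x \<in> I"
    show "h x = z x"
      by (rule LIMSEQ_unique_frequently_near[OF lim[OF \<open>x \<in> I\<close>]])
         (rule infinite_near_derived_point[OF z \<open>x \<in> I\<close>])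
  qed
  moreover have "z \<in> subtopology (powertop_real I) S closure_of (range fs)"
    by (rule subsetD[OF derived_set_of_subset_closure_of z])
  ultimately show ?thesis
    using closure_of_mono[OF fs] by blast
qed

lemma relatively_countably_compact_imp_bounded_at:
  assumes rcc: "relatively_countably_compact (subtopology (powertop_real I) S) A" and "x \<in> I"
  shows "\<exists>M. \<forall>f\<in>A. \<bar>f x\<bar> \<le> M"
proof (rule ccontr)
  assume "\<nexists>M. \<forall>f\<in>A. \<bar>f x\<bar> \<le> M"
  then have "\<forall>n::nat. \<exists>f\<in>A. \<bar>f x\<bar> > real n"
    by (meson not_le)
  then obtain fs where fs: "\<And>n. fs n \<in> A" "\<And>n. \<bar>fs n x\<bar> > real n"
    by metis
  have "infinite (range fs)"
  proof
    assume "finite (range fs)"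
    then have "bdd_above ((\<lambda>f. \<bar>f x\<bar>) ` range fs)"
      by simp
    then obtain M where "\<And>n. \<bar>fs n x\<bar> \<le> M"
      unfolding bdd_above_def by auto
    then show False
      using fs(2)[of "nat \<lceil>M\<rceil>"] real_nat_ceiling_ge[of M] by (smt (verit))
  qed
  then obtain z where z: "z \<in> subtopology (powertop_real I) S derived_set_of (range fs)"
    using rcc fs(1) unfolding relatively_countably_compact_def by blast
  define N where "N = nat \<lceil>\<bar>z x\<bar> + 1\<rceil>"
  have "{n. \<bar>fs n x - z x\<bar> < 1} \<subseteq> {..<N}"
  proof
    fix n assume "n \<in> {n. \<bar>fs n x - z x\<bar> < 1}"
    then have "\<bar>fs n x - z x\<bar> < 1"
      by simp
    then have "real n < real N"
      using fs(2)[of n] real_nat_ceiling_ge[of "\<bar>z x\<bar> + 1"] unfolding N_def by (smt (verit))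
    then show "n \<in> {..<N}"
      by simp
  qed
  then show False
    using infinite_near_derived_point[OF z \<open>x \<in> I\<close>, of 1] finite_subset by auto
qed

lemma compactin_closure_if_bounded:
  assumes A: "A \<subseteq> extensional I" and bounded: "\<And>x. x \<in> I \<Longrightarrow> \<exists>M. \<forall>f\<in>A. \<bar>f x\<bar> \<le> M"
  shows "compactin (powertop_real I) (powertop_real I closure_of A)"
proof -
  obtain M where M: "\<And>x f. x \<in> I \<Longrightarrow> f \<in> A \<Longrightarrow> \<bar>f x\<bar> \<le> M x"
    using bounded by metis
  define B where "B = (\<Pi>\<^sub>E x\<in>I. {- M x..M x})"
  have "compactin (powertop_real I) B"
    unfolding B_def compactin_PiE by simp
  moreover have "closedin (powertop_real I) B"
    unfolding B_def closedin_product_topology by simp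
  moreover have "A \<subseteq> B"
  proof
    fix f assume "f \<in> A"
    then show "f \<in> B"
      using A M unfolding B_def PiE_iff by (force simp: abs_le_iff)
  qed
  ultimately show ?thesis
    by (meson closed_compactin closedin_closure_of closure_of_minimal)
qed

definition indicator_on :: "'a set \<Rightarrow> 'a set \<Rightarrow> 'a \<Rightarrow> real" where
  "indicator_on I C = restrict (indicator C) I"

lemma indicator_on_extensional: "indicator_on I C \<in> extensional I"
  by (simp add: indicator_on_def)

lemma inj_on_indicator_on: "inj_on (indicator_on I) (Pow I)"
proof (rule inj_onI)
  fix C D assume "C \<in> Pow I" "D \<in> Pow I" and eq: "indicator_on I C = indicator_on I D"
  have "x \<in> C \<longleftrightarrow> x \<in> D" if "x \<in> I" for x
    using fun_cong[OF eq, of x] that by (auto simp: indicator_on_def indicator_def)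
  then show "C = D"
    using \<open>C \<in> Pow I\<close> \<open>D \<in> Pow I\<close> by blast
qed

lemma PiE_zero_one_eq_indicator_on_image:
  assumes "E \<subseteq> I"
  shows "(\<Pi>\<^sub>E x\<in>I. if x \<in> E then {0, 1} else {0}) = indicator_on I ` Pow E"
proof
  show "indicator_on I ` Pow E \<subseteq> (\<Pi>\<^sub>E x\<in>I. if x \<in> E then {0, 1} else {0})"
    by (auto simp: indicator_on_def indicator_def)
next
  show "(\<Pi>\<^sub>E x\<in>I. if x \<in> E then {0, 1} else {0}) \<subseteq> indicator_on I ` Pow E"
  proof
    fix f :: "'a \<Rightarrow> real" assume f: "f \<in> (\<Pi>\<^sub>E x\<in>I. if x \<in> E then {0, 1} else {0})"
    have "f = indicator_on I {x \<in> E. f x = 1}"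
    proof (rule extensionalityI)
      show "f \<in> extensional I"
        using f PiE_iff by blast
      show "indicator_on I {x \<in> E. f x = 1} \<in> extensional I"
        by (rule indicator_on_extensional)
      fix x assume "x \<in> I"
      then show "f x = indicator_on I {x \<in> E. f x = 1} x"
        using f by (fastforce simp: indicator_on_def PiE_iff split: if_splits)
    qed
    then show "f \<in> indicator_on I ` Pow E"
      by blast
  qed
qed

lemma indicator_on_in_closure_of_finite:
  "indicator_on I T \<in> powertop_real I closure_of (indicator_on I ` {C. C \<subseteq> T \<and> finite C})"
  unfolding in_closure_of
proof (intro conjI allI impI)
  show "indicator_on I T \<in> topspace (powertop_real I)"
    by (metis topspace_powertop_real indicator_on_extensional)
  fix W assume W: "indicator_on I T \<in> W \<and> openin (powertop_real I) W"
  then obtain U where U: "finite {i \<in> I. U i \<noteq> UNIV}" "indicator_on I T \<in> (\<Pi>\<^sub>E i\<in>I. U i)"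
      "(\<Pi>\<^sub>E i\<in>I. U i) \<subseteq> W"
    unfolding openin_product_topology_alt by auto
  define C where "C = T \<inter> {i \<in> I. U i \<noteq> UNIV}"
  have "indicator_on I C \<in> (\<Pi>\<^sub>E i\<in>I. U i)"
    using U(2) by (auto simp: PiE_iff indicator_on_def indicator_def C_def)
  moreover have "C \<subseteq> T \<and> finite C"
    using U(1) by (simp add: C_def)
  ultimately show "\<exists>f. f \<in> indicator_on I ` {C. C \<subseteq> T \<and> finite C} \<and> f \<in> W"
    using U(3) by blast
qed

lemma relatively_countably_compact_countable_indicators:
  assumes "T \<subseteq> I"
  defines "S \<equiv> indicator_on I ` {C. C \<subseteq> T \<and> countable C}"
  shows "relatively_countably_compact (subtopology (powertop_real I) S) S"
  unfolding relatively_countably_compact_def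
proof (intro allI impI)
  fix B assume B: "B \<subseteq> S \<and> infinite B"
  then obtain b :: "nat \<Rightarrow> _" where "inj b" "range b \<subseteq> B"
    using infinite_countable_subset by blast
  then have "range b \<subseteq> S" "infinite (range b)"
    using B range_inj_infinite by auto
  then have "\<forall>n. \<exists>C. C \<subseteq> T \<and> countable C \<and> b n = indicator_on I C"
    unfolding S_def by blast
  then obtain c where c: "\<And>n. c n \<subseteq> T \<and> countable (c n) \<and> b n = indicator_on I (c n)"
    by metis
  define E where "E = (\<Union>n. c n)"
  have E: "E \<subseteq> T" "countable E"
    using c by (auto simp: E_def)
  define K where "K = indicator_on I ` Pow E"
  have "compactin (powertop_real I) K"
    using E(1) assms(1)
    by (simp add: K_def PiE_zero_one_eq_indicator_on_image[symmetric] compactin_PiE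
        finite_imp_compact)
  moreover have "range b \<subseteq> K"
    using c by (auto simp: K_def E_def)
  ultimately obtain z where z: "z \<in> K" "z \<in> powertop_real I derived_set_of (range b)"
    using compactin_imp_Bolzano_Weierstrass \<open>infinite (range b)\<close> by blast
  have "K \<subseteq> S"
    using E by (auto simp: K_def S_def intro: countable_subset)
  then have "z \<in> S \<inter> powertop_real I derived_set_of (S \<inter> B)"
    using z derived_set_of_mono[OF \<open>range b \<subseteq> B\<close>, of "powertop_real I"] B
    by (auto simp: Int_absorb1)
  then show "subtopology (powertop_real I) S derived_set_of B \<noteq> {}"
    unfolding derived_set_of_subtopology by blast
qed

lemma not_grothendieck_if_countable_indicators_continuous:
  assumes T: "T \<subseteq> topspace X" "uncountable T"
    and cont: "\<And>C. C \<subseteq> T \<Longrightarrow> countable C \<Longrightarrow>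
                  continuous_map X euclideanreal (indicator_on (topspace X) C)"
  shows "\<not> grothendieck X"
proof
  assume "grothendieck X"
  define I where "I = topspace X"
  define S where "S = indicator_on I ` {C. C \<subseteq> T \<and> countable C}"
  have "S \<subseteq> topspace (Cp X)"
    using cont by (auto simp: S_def I_def topspace_Cp indicator_on_extensional)
  then have "g_space (subtopology (powertop_real I) S)"
    using \<open>grothendieck X\<close> subtopology_Cp unfolding grothendieck_def I_def by metis
  moreover have "topspace (subtopology (powertop_real I) S) = S"
    using indicator_on_extensional unfolding topspace_subtopology topspace_powertop_real S_def
    by blast
  moreover have "relatively_countably_compact (subtopology (powertop_real I) S) S"
    unfolding S_def using T(1) I_def by (blast intro: relatively_countably_compact_countable_indicators)
  ultimately have "compactin (subtopology (powertop_real I) S) S"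
    unfolding g_space_iff by (metis closure_of_topspace order_refl)
  then have "closedin (powertop_real I) S"
    by (simp add: compactin_subtopology compactin_imp_closedin Hausdorff_space_product_topology)
  moreover have "indicator_on I T \<in> powertop_real I closure_of S"
  proof -
    have "indicator_on I ` {C. C \<subseteq> T \<and> finite C} \<subseteq> S"
      unfolding S_def using countable_finite by blast
    then show ?thesis
      using closure_of_mono indicator_on_in_closure_of_finite by blast
  qed
  ultimately have "indicator_on I T \<in> S"
    by (simp add: closure_of_closedin)
  then obtain C where "C \<subseteq> T" "countable C" "indicator_on I T = indicator_on I C"
    unfolding S_def by blast
  then have "C = T"
    using inj_on_indicator_on[of I] T(1) unfolding I_def inj_on_def by blast
  with \<open>countable C\<close> T(2) show False
    by simp
qed

definition approximable_on :: "('a \<Rightarrow> real) set \<Rightarrow> ('a \<Rightarrow> real) \<Rightarrow> 'a set \<Rightarrow> bool" where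
  "approximable_on A g Y \<longleftrightarrow>
     (\<forall>F e. finite F \<and> F \<subseteq> Y \<and> e > 0 \<longrightarrow> (\<exists>f\<in>A. \<forall>x\<in>F. \<bar>f x - g x\<bar> < e))"

lemma approximable_on_subset:
  "approximable_on A g Y \<Longrightarrow> A \<subseteq> A' \<Longrightarrow> Z \<subseteq> Y \<Longrightarrow> approximable_on A' g Z"
  unfolding approximable_on_def by (meson order_trans subsetD)

lemma approximable_on_if_in_closure:
  assumes "g \<in> powertop_real I closure_of A"
  shows "approximable_on A g I"
  unfolding approximable_on_def
proof (intro allI impI)
  fix F and e :: real assume F: "finite F \<and> F \<subseteq> I \<and> e > 0"
  define V where "V = (\<Pi>\<^sub>E x\<in>I. if x \<in> F then ball (g x) e else UNIV)"
  have "{x \<in> I. (if x \<in> F then ball (g x) e else UNIV) \<noteq> UNIV} \<subseteq> F"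
    by auto
  then have "openin (powertop_real I) V"
    unfolding V_def openin_PiE_gen using F finite_subset by auto
  moreover have "g \<in> V"
    using assms F closure_of_subset_topspace[of "powertop_real I" A]
    by (auto simp: V_def PiE_iff)
  ultimately obtain f where "f \<in> A" "f \<in> V"
    using assms unfolding in_closure_of by blast
  moreover have "\<bar>f x - g x\<bar> < e" if "x \<in> F" for x
  proof -
    have "x \<in> I"
      using that F by blast
    then have "f x \<in> (if x \<in> F then ball (g x) e else UNIV)"
      using \<open>f \<in> V\<close> unfolding V_def PiE_iff by blast
    then have "f x \<in> ball (g x) e"
      using that by simp
    then show ?thesis
      by (simp add: dist_real_def abs_minus_commute)
  qed
  ultimately show "\<exists>f\<in>A. \<forall>x\<in>F. \<bar>f x - g x\<bar> < e"
    by blast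
qed

lemma approximable_on_countable_subfamily:
  assumes "countable Y" "approximable_on A g Y"
  obtains A' where "A' \<subseteq> A" "countable A'" "approximable_on A' g Y"
proof -
  define I where "I = {F. finite F \<and> F \<subseteq> Y} \<times> (UNIV :: nat set)"
  have "\<forall>i\<in>I. \<exists>f\<in>A. \<forall>x\<in>fst i. \<bar>f x - g x\<bar> < 1 / Suc (snd i)"
    using assms(2) unfolding approximable_on_def I_def by auto
  then obtain c where c: "\<And>i. i \<in> I \<Longrightarrow> c i \<in> A \<and> (\<forall>x\<in>fst i. \<bar>c i x - g x\<bar> < 1 / Suc (snd i))"
    by metis
  have "approximable_on (c ` I) g Y"
    unfolding approximable_on_def
  proof (intro allI impI)
    fix F and e :: real assume F: "finite F \<and> F \<subseteq> Y \<and> e > 0"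
    then obtain n where n: "1 / Suc n < e"
      using reals_Archimedean by (auto simp: divide_inverse)
    have "(F, n) \<in> I"
      using F by (simp add: I_def)
    then show "\<exists>f\<in>c ` I. \<forall>x\<in>F. \<bar>f x - g x\<bar> < e"
      using c[of "(F, n)"] n by force
  qed
  moreover have "countable I"
    unfolding I_def using countable_Collect_finite_subset[OF assms(1)] by simp
  ultimately show thesis
    using c by (intro that[of "c ` I"]) auto
qed

lemma approximable_on_imp_pointwise_limit:
  assumes "countable Y" "Y \<noteq> {}" "approximable_on A g Y"
  obtains fs where "range fs \<subseteq> A" "\<And>y. y \<in> Y \<Longrightarrow> (\<lambda>n. fs n y) \<longlonglongrightarrow> g y"
proof -
  define e where "e = from_nat_into Y"
  have "\<exists>f\<in>A. \<forall>x\<in>e ` {..n}. \<bar>f x - g x\<bar> < 1 / Suc n" for n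
  proof -
    have "finite (e ` {..n})" "e ` {..n} \<subseteq> Y" "(0::real) < 1 / Suc n"
      using from_nat_into[OF assms(2)] by (auto simp: e_def)
    then show ?thesis
      using assms(3) unfolding approximable_on_def by blast
  qed
  then obtain fs where fs: "\<And>n. fs n \<in> A" "\<And>n x. x \<in> e ` {..n} \<Longrightarrow> \<bar>fs n x - g x\<bar> < 1 / Suc n"
    by metis
  have "(\<lambda>n. fs n y) \<longlonglongrightarrow> g y" if y: "y \<in> Y" for y
  proof -
    obtain i where "e i = y"
      unfolding e_def using from_nat_into_surj[OF assms(1) y] by blast
    then have "\<forall>\<^sub>F n in sequentially. norm (fs n y - g y) \<le> inverse (real (Suc n))"
      using fs(2) by (intro eventually_sequentiallyI[of i]) (force simp: divide_inverse)
    then have "(\<lambda>n. fs n y - g y) \<longlonglongrightarrow> 0"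
      by (rule Lim_null_comparison[OF _ LIMSEQ_inverse_real_of_nat])
    then show ?thesis
      by (rule LIM_zero_cancel)
  qed
  then show thesis
    using fs(1) by (intro that) auto
qed

lemma finite_subset_Union_incseq:
  fixes A :: "nat \<Rightarrow> 'a set"
  assumes "incseq A" "finite F" "F \<subseteq> (\<Union>n. A n)"
  obtains n where "F \<subseteq> A n"
proof -
  have chain: "subset.chain UNIV (range A)"
    unfolding subset_chain_def
  proof (intro conjI ballI)
    fix B C assume "B \<in> range A" "C \<in> range A"
    then obtain m n where "B = A m" "C = A n"
      by blast
    then show "B \<subseteq> C \<or> C \<subseteq> B"
      using \<open>incseq A\<close> nat_le_linear[of m n] by (auto dest: incseqD)
  qed simp
  obtain B where "B \<in> range A" "F \<subseteq> B"
    by (rule finite_subset_Union_chain[OF assms(2,3) _ chain]) auto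
  then show thesis
    using that by blast
qed

lemma countable_closing_off:
  assumes "countable Y0" "Y0 \<subseteq> I" and approx: "approximable_on A g I"
    and supp: "\<And>f. f \<in> A \<Longrightarrow> countable {x \<in> I. f x \<noteq> f p}"
  obtains Y A' where "countable Y" "Y0 \<subseteq> Y" "Y \<subseteq> I" "A' \<subseteq> A"
    "\<forall>f\<in>A'. \<forall>x\<in>I - Y. f x = f p" "approximable_on A' g Y"
proof -
  have "\<exists>A'. countable Y \<and> Y \<subseteq> I \<longrightarrow>
          A' \<subseteq> A \<and> countable A' \<and> approximable_on A' g Y" for Y
  proof (cases "countable Y \<and> Y \<subseteq> I")
    case True
    then have "approximable_on A g Y"
      using approximable_on_subset[OF approx order_refl] by blast
    then obtain A' where "A' \<subseteq> A" "countable A'" "approximable_on A' g Y"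
      using approximable_on_countable_subfamily True by blast
    then show ?thesis
      by blast
  qed blast
  then obtain next_family where next_family:
    "\<And>Y. countable Y \<Longrightarrow> Y \<subseteq> I \<Longrightarrow> next_family Y \<subseteq> A \<and> countable (next_family Y) \<and>
       approximable_on (next_family Y) g Y"
    by metis
  define step where "step Y = Y \<union> (\<Union>f\<in>next_family Y. {x \<in> I. f x \<noteq> f p})" for Y
  define Ys where "Ys n = (step ^^ n) Y0" for n
  have Ys: "countable (Ys n) \<and> Ys n \<subseteq> I" for n
  proof (induction n)
    case 0
    then show ?case
      using assms(1,2) by (simp add: Ys_def)
  next
    case (Suc n)
    then have "next_family (Ys n) \<subseteq> A" "countable (next_family (Ys n))"
      using next_family by blast+
    then have "countable (\<Union>f\<in>next_family (Ys n). {x \<in> I. f x \<noteq> f p})"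
      using supp by (intro countable_UN) auto
    then show ?case
      using Suc by (auto simp: Ys_def step_def)
  qed
  have "incseq Ys"
    by (rule incseq_SucI) (simp add: Ys_def step_def)
  define Y where "Y = (\<Union>n. Ys n)"
  define A' where "A' = (\<Union>n. next_family (Ys n))"
  show thesis
  proof
    show "countable Y"
      using Ys by (simp add: Y_def)
    show "Y0 \<subseteq> Y"
      using Ys_def Y_def by (metis UN_upper UNIV_I funpow_0)
    show "Y \<subseteq> I"
      using Ys by (auto simp: Y_def)
    show "A' \<subseteq> A"
      using Ys next_family unfolding A'_def by blast
  next
    show "\<forall>f\<in>A'. \<forall>x\<in>I - Y. f x = f p"
    proof (intro ballI)
      fix f x assume "f \<in> A'" "x \<in> I - Y"
      then obtain n where "f \<in> next_family (Ys n)" "x \<notin> Ys (Suc n)"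
        by (auto simp: A'_def Y_def)
      then show "f x = f p"
        using \<open>x \<in> I - Y\<close> by (auto simp: Ys_def step_def)
    qed
  next
    show "approximable_on A' g Y"
      unfolding approximable_on_def
    proof (intro allI impI)
      fix F and e :: real assume F: "finite F \<and> F \<subseteq> Y \<and> e > 0"
      then have "finite F" "F \<subseteq> (\<Union>n. Ys n)"
        by (simp_all add: Y_def)
      then obtain n where "F \<subseteq> Ys n"
        by (rule finite_subset_Union_incseq[OF \<open>incseq Ys\<close>])
      moreover have "approximable_on (next_family (Ys n)) g (Ys n)"
        using next_family Ys by blast
      ultimately obtain f where "f \<in> next_family (Ys n)" "\<forall>x\<in>F. \<bar>f x - g x\<bar> < e"
        using \<open>finite F\<close> F unfolding approximable_on_def by blast
      then show "\<exists>f\<in>A'. \<forall>x\<in>F. \<bar>f x - g x\<bar> < e"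
        by (auto simp: A'_def)
    qed
  qed
qed

locale almost_discrete_at =
  fixes X :: "'a topology" and p :: 'a
  assumes p_in_topspace: "p \<in> topspace X"
    and openin_singleton: "\<And>x. x \<in> topspace X \<Longrightarrow> x \<noteq> p \<Longrightarrow> openin X {x}"
begin

lemma continuous_map_if_constant_near:
  assumes "openin X W" "p \<in> W" and const: "\<And>x. x \<in> W \<Longrightarrow> f x = c"
  shows "continuous_map X euclideanreal f"
  unfolding continuous_map_def
proof (intro conjI allI impI)
  fix U :: "real set"
  have "\<exists>T. openin X T \<and> x \<in> T \<and> T \<subseteq> {x \<in> topspace X. f x \<in> U}"
    if "x \<in> {x \<in> topspace X. f x \<in> U}" for x
  proof (cases "x = p")
    case True
    then show ?thesis
      using that assms openin_subset[OF assms(1)] by (intro exI[of _ W]) auto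
  next
    case False
    then show ?thesis
      using that openin_singleton by (intro exI[of _ "{x}"]) auto
  qed
  then show "openin X {x \<in> topspace X. f x \<in> U}"
    by (subst openin_subopen) blast
qed simp

lemma continuous_indicator_on:
  assumes "p \<notin> X closure_of C"
  shows "continuous_map X euclideanreal (indicator_on (topspace X) C)"
proof -
  obtain W where W: "openin X W" "p \<in> W" "W \<inter> C = {}"
    using assms p_in_topspace unfolding in_closure_of by blast
  have "indicator_on (topspace X) C x = 0" if "x \<in> W" for x
  proof -
    have "x \<in> topspace X" "x \<notin> C"
      using W openin_subset[OF W(1)] that by auto
    then show ?thesis
      by (simp add: indicator_on_def)
  qed
  then show ?thesis
    by (rule continuous_map_if_constant_near[OF W(1,2)])
qed

lemma Lindelof_iff_countable_complements:
  "Lindelof_space X \<longleftrightarrow> (\<forall>U. openin X U \<and> p \<in> U \<longrightarrow> countable (topspace X - U))"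
proof (intro iffI allI impI)
  fix U assume L: "Lindelof_space X" and U: "openin X U \<and> p \<in> U"
  define \<U> where "\<U> = insert U ((\<lambda>x. {x}) ` (topspace X - U))"
  have "openin X V" if "V \<in> \<U>" for V
    using that U openin_singleton unfolding \<U>_def by blast
  moreover have "\<Union>\<U> = topspace X"
    using U openin_subset[of X U] unfolding \<U>_def by blast
  ultimately have "\<exists>\<V>. countable \<V> \<and> \<V> \<subseteq> \<U> \<and> \<Union>\<V> = topspace X"
    by (rule Lindelof_spaceD[OF L])
  then obtain \<V> where \<V>: "countable \<V>" "\<V> \<subseteq> \<U>" "\<Union>\<V> = topspace X"
    by (elim exE conjE)
  have "topspace X - U \<subseteq> (\<Union>V\<in>\<V> - {U}. V)"
    using \<V>(3) by blast
  moreover have "countable (\<Union>V\<in>\<V> - {U}. V)"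
  proof (rule countable_UN)
    show "countable (\<V> - {U})"
      using \<V>(1) by simp
    fix V assume "V \<in> \<V> - {U}"
    then obtain x where "V = {x}"
      using \<V>(2) unfolding \<U>_def by blast
    then show "countable V"
      by simp
  qed
  ultimately show "countable (topspace X - U)"
    by (rule countable_subset)
next
  assume co: "\<forall>U. openin X U \<and> p \<in> U \<longrightarrow> countable (topspace X - U)"
  show "Lindelof_space X"
    unfolding Lindelof_space_def
  proof (intro allI impI)
    fix \<U> assume "(\<forall>U\<in>\<U>. openin X U) \<and> \<Union>\<U> = topspace X"
    then have open_cover: "\<And>U. U \<in> \<U> \<Longrightarrow> openin X U" and "\<Union>\<U> = topspace X"
      by auto
    then have covers: "topspace X \<subseteq> \<Union>\<U>" and inside: "\<Union>\<U> \<subseteq> topspace X"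
      by auto
    obtain U where U: "U \<in> \<U>" "p \<in> U"
      using covers p_in_topspace by blast
    have "\<forall>x \<in> topspace X - U. \<exists>V\<in>\<U>. x \<in> V"
      using covers by blast
    then obtain c where c: "\<And>x. x \<in> topspace X - U \<Longrightarrow> c x \<in> \<U> \<and> x \<in> c x"
      by metis
    have "countable (topspace X - U)"
      using co U open_cover by blast
    show "\<exists>\<V>. countable \<V> \<and> \<V> \<subseteq> \<U> \<and> \<Union>\<V> = topspace X"
    proof (intro exI conjI)
      show "countable (insert U (c ` (topspace X - U)))"
        using \<open>countable (topspace X - U)\<close> by simp
      show sub: "insert U (c ` (topspace X - U)) \<subseteq> \<U>"
        using U c by blast
      show "\<Union>(insert U (c ` (topspace X - U))) = topspace X"
      proof
        show "\<Union>(insert U (c ` (topspace X - U))) \<subseteq> topspace X"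
          using sub inside by blast
        show "topspace X \<subseteq> \<Union>(insert U (c ` (topspace X - U)))"
          using c by blast
      qed
    qed
  qed
qed

lemma countable_nonconstant_set:
  assumes L: "Lindelof_space X" and f: "continuous_map X euclideanreal f"
  shows "countable {x \<in> topspace X. f x \<noteq> f p}"
proof -
  define N where "N n = topspace X - {x \<in> topspace X. f x \<in> ball (f p) (1 / Suc n)}" for n
  have "countable (N n)" for n
  proof -
    have "openin X {x \<in> topspace X. f x \<in> ball (f p) (1 / Suc n)}"
      by (rule openin_continuous_map_preimage[OF f]) simp
    moreover have "p \<in> {x \<in> topspace X. f x \<in> ball (f p) (1 / Suc n)}"
      using p_in_topspace by simp
    ultimately show ?thesis
      using L unfolding N_def Lindelof_iff_countable_complements by blast
  qed
  moreover have "{x \<in> topspace X. f x \<noteq> f p} \<subseteq> (\<Union>n. N n)"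
  proof
    fix x assume x: "x \<in> {x \<in> topspace X. f x \<noteq> f p}"
    then have "dist (f p) (f x) > 0"
      by simp
    then obtain n where "inverse (real (Suc n)) < dist (f p) (f x)"
      using reals_Archimedean by blast
    then have "x \<in> N n"
      using x by (auto simp: N_def divide_inverse)
    then show "x \<in> (\<Union>n. N n)"
      by blast
  qed
  ultimately show ?thesis
    by (meson countable_UN countable_subset UNIV_I countableI_type)
qed

lemma grothendieck_imp_Lindelof:
  assumes "grothendieck X"
  shows "Lindelof_space X"
proof (rule ccontr)
  assume "\<not> Lindelof_space X"
  then obtain W where W: "openin X W" "p \<in> W" "uncountable (topspace X - W)"
    unfolding Lindelof_iff_countable_complements by blast
  have "\<not> grothendieck X"
  proof (rule not_grothendieck_if_countable_indicators_continuous)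
    show "topspace X - W \<subseteq> topspace X" "uncountable (topspace X - W)"
      using W(3) by auto
    fix C assume "C \<subseteq> topspace X - W"
    then have "p \<notin> X closure_of C"
      using W unfolding in_closure_of by blast
    then show "continuous_map X euclideanreal (indicator_on (topspace X) C)"
      by (rule continuous_indicator_on)
  qed
  with assms show False
    by contradiction
qed

lemma grothendieck_imp_countably_tight:
  assumes "grothendieck X"
  shows "countably_tight X"
  unfolding countably_tight_def
proof (intro allI impI)
  fix A x assume Ax: "A \<subseteq> topspace X \<and> x \<in> X closure_of A"
  show "\<exists>B\<subseteq>A. countable B \<and> x \<in> X closure_of B"
  proof (rule ccontr)
    assume far: "\<not> (\<exists>B\<subseteq>A. countable B \<and> x \<in> X closure_of B)"
    have x: "x \<in> topspace X"
      using Ax closure_of_subset_topspace[of X A] by blast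
    have "x \<notin> A"
    proof
      assume "x \<in> A"
      moreover have "x \<in> X closure_of {x}"
        using x closure_of_subset[of "{x}" X] by blast
      moreover have "countable {x}"
        by simp
      ultimately show False
        using far by blast
    qed
    have "x = p"
    proof (rule ccontr)
      assume "x \<noteq> p"
      then have "{x} \<inter> A \<noteq> {}"
        using Ax x openin_singleton unfolding in_closure_of by blast
      with \<open>x \<notin> A\<close> show False
        by blast
    qed
    have "\<not> grothendieck X"
    proof (rule not_grothendieck_if_countable_indicators_continuous)
      show "A \<subseteq> topspace X"
        using Ax by blast
      show "uncountable A"
        using far Ax by blast
      fix C assume "C \<subseteq> A" "countable C"
      then have "p \<notin> X closure_of C"
        using far \<open>x = p\<close> by blast
      then show "continuous_map X euclideanreal (indicator_on (topspace X) C)"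
        by (rule continuous_indicator_on)
    qed
    with assms show False
      by contradiction
  qed
qed


lemma modified_function_in_closure:
  assumes L: "Lindelof_space X" and S: "S \<subseteq> topspace (Cp X)" "A \<subseteq> S"
    and rcc: "relatively_countably_compact (subtopology (powertop_real (topspace X)) S) A"
    and g: "approximable_on A g (topspace X)"
    and Y0: "countable Y0" "p \<in> Y0" "Y0 \<subseteq> topspace X"
  obtains Y where "Y0 \<subseteq> Y"
    "restrict (\<lambda>x. if x \<in> Y then g x else g p) (topspace X)
       \<in> subtopology (powertop_real (topspace X)) S closure_of A"
proof -
  have Scont: "\<And>f. f \<in> S \<Longrightarrow> continuous_map X euclideanreal f"
    and Sext: "S \<subseteq> extensional (topspace X)"
    using S(1) by (auto simp: topspace_Cp)
  have supp: "countable {x \<in> topspace X. f x \<noteq> f p}" if "f \<in> A" for f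
    using countable_nonconstant_set[OF L Scont] that S(2) by blast
  obtain Y A' where Y: "countable Y" "Y0 \<subseteq> Y" "Y \<subseteq> topspace X" "A' \<subseteq> A"
    and const: "\<forall>f\<in>A'. \<forall>x\<in>topspace X - Y. f x = f p"
    and approx: "approximable_on A' g Y"
    by (rule countable_closing_off[OF Y0(1,3) g supp])
  have "p \<in> Y"
    using Y0(2) Y(2) by blast
  then obtain fs where fs: "range fs \<subseteq> A'" and lim: "\<And>y. y \<in> Y \<Longrightarrow> (\<lambda>n. fs n y) \<longlonglongrightarrow> g y"
    using approximable_on_imp_pointwise_limit[OF Y(1) _ approx] by blast
  have "restrict (\<lambda>x. if x \<in> Y then g x else g p) (topspace X)
          \<in> subtopology (powertop_real (topspace X)) S closure_of A"
  proof (rule pointwise_limit_in_closure[OF rcc S(2) Sext])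
    show "range fs \<subseteq> A"
      using fs Y(4) by blast
    fix x assume x: "x \<in> topspace X"
    show "(\<lambda>n. fs n x) \<longlonglongrightarrow> restrict (\<lambda>x. if x \<in> Y then g x else g p) (topspace X) x"
    proof (cases "x \<in> Y")
      case True
      then show ?thesis
        using lim x by simp
    next
      case False
      have "fs n x = fs n p" for n
        using const fs x False by blast
      then have "(\<lambda>n. fs n x) = (\<lambda>n. fs n p)"
        by simp
      then show ?thesis
        using lim[OF \<open>p \<in> Y\<close>] x False by simp
    qed
  qed simp
  with Y(2) show thesis
    by (rule that)
qed

lemma countable_nonconstant_set_if_approximable:
  assumes L: "Lindelof_space X" and tight: "countably_tight X"
    and S: "S \<subseteq> topspace (Cp X)" "A \<subseteq> S"
    and rcc: "relatively_countably_compact (subtopology (powertop_real (topspace X)) S) A"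
    and g: "approximable_on A g (topspace X)"
  shows "countable {x \<in> topspace X. g x \<noteq> g p}"
proof (rule ccontr)
  define E where "E k = {x \<in> topspace X. 1 / Suc k \<le> \<bar>g x - g p\<bar>}" for k :: nat
  assume "uncountable {x \<in> topspace X. g x \<noteq> g p}"
  moreover have "{x \<in> topspace X. g x \<noteq> g p} \<subseteq> (\<Union>k. E k)"
  proof
    fix x assume x: "x \<in> {x \<in> topspace X. g x \<noteq> g p}"
    then obtain k where "inverse (real (Suc k)) < \<bar>g x - g p\<bar>"
      using reals_Archimedean[of "\<bar>g x - g p\<bar>"] by auto
    then have "x \<in> E k"
      using x by (auto simp: E_def divide_inverse)
    then show "x \<in> (\<Union>k. E k)"
      by blast
  qed
  ultimately have "uncountable (\<Union>k. E k)"
    using countable_subset by blast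
  then obtain k where "uncountable (E k)"
    by auto
  have E: "E k \<subseteq> topspace X"
    by (auto simp: E_def)
  have "p \<in> X closure_of E k"
    unfolding in_closure_of
  proof (intro conjI allI impI)
    fix T assume "p \<in> T \<and> openin X T"
    then have "countable (topspace X - T)"
      using L unfolding Lindelof_iff_countable_complements by blast
    then have "\<not> E k \<subseteq> topspace X - T"
      using \<open>uncountable (E k)\<close> countable_subset by blast
    then show "\<exists>y. y \<in> E k \<and> y \<in> T"
      using E by blast
  qed (rule p_in_topspace)
  then obtain B where B: "B \<subseteq> E k" "countable B" "p \<in> X closure_of B"
    using tight E unfolding countably_tight_def by blast
  have "countable (insert p B)" "insert p B \<subseteq> topspace X"
    using B E p_in_topspace by auto
  then obtain Y where Y: "insert p B \<subseteq> Y" and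
    h: "restrict (\<lambda>x. if x \<in> Y then g x else g p) (topspace X)
          \<in> subtopology (powertop_real (topspace X)) S closure_of A"
    by (rule modified_function_in_closure[OF L S rcc g _ insertI1])
  define h where "h = restrict (\<lambda>x. if x \<in> Y then g x else g p) (topspace X)"
  have "h \<in> S"
    using h closure_of_subset_topspace[of "subtopology (powertop_real (topspace X)) S" A]
    unfolding h_def topspace_subtopology by blast
  then have "continuous_map X euclideanreal h"
    using S(1) by (auto simp: topspace_Cp)
  define U where "U = {x \<in> topspace X. h x \<in> ball (g p) (1 / Suc k)}"
  have "openin X U"
    unfolding U_def by (rule openin_continuous_map_preimage[OF \<open>continuous_map X euclideanreal h\<close>]) simp
  moreover have "p \<in> U"
    using p_in_topspace by (simp add: U_def h_def)
  ultimately obtain y where "y \<in> B" "y \<in> U"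
    using B(3) unfolding in_closure_of by blast
  then have "y \<in> Y" "y \<in> topspace X" "y \<in> E k"
    using B(1) E Y by blast+
  then show False
    using \<open>y \<in> U\<close> by (simp add: U_def h_def E_def dist_real_def abs_minus_commute)
qed

lemma approximable_imp_in_closure:
  assumes L: "Lindelof_space X" and tight: "countably_tight X"
    and S: "S \<subseteq> topspace (Cp X)" "A \<subseteq> S"
    and rcc: "relatively_countably_compact (subtopology (powertop_real (topspace X)) S) A"
    and g: "approximable_on A g (topspace X)" "g \<in> extensional (topspace X)"
  shows "g \<in> subtopology (powertop_real (topspace X)) S closure_of A"
proof -
  define Y0 where "Y0 = insert p {x \<in> topspace X. g x \<noteq> g p}"
  have "countable Y0"
    using countable_nonconstant_set_if_approximable[OF L tight S rcc g(1)] by (simp add: Y0_def)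
  moreover have "p \<in> Y0" "Y0 \<subseteq> topspace X"
    using p_in_topspace by (auto simp: Y0_def)
  ultimately obtain Y where Y: "Y0 \<subseteq> Y" and
    "restrict (\<lambda>x. if x \<in> Y then g x else g p) (topspace X)
       \<in> subtopology (powertop_real (topspace X)) S closure_of A"
    by (rule modified_function_in_closure[OF L S rcc g(1)])
  moreover have "restrict (\<lambda>x. if x \<in> Y then g x else g p) (topspace X) = g"
  proof (rule extensionalityI[OF _ g(2)])
    fix x assume "x \<in> topspace X"
    then show "restrict (\<lambda>x. if x \<in> Y then g x else g p) (topspace X) x = g x"
      using Y by (auto simp: Y0_def)
  qed simp
  ultimately show ?thesis
    by simp
qed

lemma Lindelof_countably_tight_imp_grothendieck:
  assumes L: "Lindelof_space X" and tight: "countably_tight X"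
  shows "grothendieck X"
  unfolding grothendieck_def
proof (intro allI impI)
  fix S assume S: "S \<subseteq> topspace (Cp X)"
  define Z where "Z = subtopology (powertop_real (topspace X)) S"
  have "compactin Z (Z closure_of A)"
    if A: "A \<subseteq> topspace Z" and rcc: "relatively_countably_compact Z A" for A
  proof -
    have "A \<subseteq> S" "A \<subseteq> extensional (topspace X)"
      using A unfolding Z_def topspace_subtopology topspace_powertop_real by blast+
    define K where "K = powertop_real (topspace X) closure_of A"
    have "compactin (powertop_real (topspace X)) K"
      unfolding K_def
      by (rule compactin_closure_if_bounded[OF \<open>A \<subseteq> extensional (topspace X)\<close>])
         (rule relatively_countably_compact_imp_bounded_at[OF rcc[unfolded Z_def]])
    moreover have "K \<subseteq> Z closure_of A"
    proof
      fix g assume "g \<in> K"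
      then have "g \<in> powertop_real (topspace X) closure_of A"
        by (simp add: K_def)
      then have "approximable_on A g (topspace X)" "g \<in> extensional (topspace X)"
        using approximable_on_if_in_closure closure_of_subset_topspace[of "powertop_real (topspace X)" A]
        unfolding topspace_powertop_real by blast+
      then show "g \<in> Z closure_of A"
        unfolding Z_def by (rule approximable_imp_in_closure[OF L tight S \<open>A \<subseteq> S\<close> rcc[unfolded Z_def]])
    qed
    moreover have closure_eq: "Z closure_of A = S \<inter> K"
      using \<open>A \<subseteq> S\<close> by (simp add: Z_def K_def closure_of_subtopology Int_absorb1)
    ultimately have "K \<subseteq> S" "Z closure_of A = K"
      by auto
    with \<open>compactin (powertop_real (topspace X)) K\<close> show ?thesis
      by (simp add: Z_def compactin_subtopology)
  qed
  then show "g_space (subtopology (Cp X) S)"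
    unfolding subtopology_Cp[OF S] g_space_iff Z_def[symmetric] by blast
qed

end

lemma almost_discrete_imp_almost_discrete_at:
  assumes "almost_discrete X"
  obtains p where "almost_discrete_at X p"
proof -
  obtain p where p: "p \<in> topspace X"
    and unique: "\<And>x. x \<in> topspace X \<Longrightarrow> \<not> isolated_point X x \<Longrightarrow> x = p"
    using assms unfolding almost_discrete_def by blast
  have "almost_discrete_at X p"
  proof
    fix x assume "x \<in> topspace X" "x \<noteq> p"
    then show "openin X {x}"
      using unique unfolding isolated_point_def by blast
  qed (rule p)
  then show thesis
    by (rule that)
qed

theorem corollary1:
  fixes X :: "'a topology"
  assumes "tychonoff_space X" and "almost_discrete X"
  shows "grothendieck X \<longleftrightarrow> Lindelof_space X \<and> countably_tight X"
proof -
  obtain p where "almost_discrete_at X p"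
    using assms(2) by (rule almost_discrete_imp_almost_discrete_at)
  then interpret almost_discrete_at X p .
  show ?thesis
    using grothendieck_imp_Lindelof grothendieck_imp_countably_tight
      Lindelof_countably_tight_imp_grothendieck by blast
qed

end
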